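(* Let $(X,d)$ be a metric space, $k\in\mathbb{N}\setminus\{1\}$ and $\epsilon>0$. Let $L_1,\dots,L_k$ be subsets of $X$ such that for each $i$, $|L_i|=k$ and $d(x,y)>2\epsilon$ for all distinct $x,y\in L_i$. Then there exist $x_i\in L_i$, $i=1,\dots,k$, such that $d(x_i,x_{i'})>\epsilon$ for all $1\le i<i'\le k$. *)

theory Defs
  imports "HOL-Analysis.Analysis"
begin

end

theory Submission
  imports Defs
begin

(* Choose x_1, ..., x_k greedily. When x_i is to be chosen from L_i, each earlier point x_j is
   within distance \<epsilon> of at most one point of L_i, since two such points would be within 2\<epsilon>
   of each other. So at most i - 1 of the k points of L_i are excluded, and one remains. *)

lemma separated_cball_card_le_1:
  fixes S :: "'a::metric_space set"
  assumes "finite S" and "pairwise (\<lambda>y z. 2 * \<epsilon> < dist y z) S"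
  shows "card (S \<inter> cball x \<epsilon>) \<le> 1"
proof -
  have "y = z" if "y \<in> S" "z \<in> S" "dist x y \<le> \<epsilon>" "dist x z \<le> \<epsilon>" for y z
  proof (rule ccontr)
    assume "y \<noteq> z"
    then have "2 * \<epsilon> < dist y z"
      using assms(2) that(1,2) by (auto simp: pairwise_def)
    moreover have "dist y z \<le> dist x y + dist x z"
      by (rule dist_triangle3)
    ultimately show False
      using that(3,4) by linarith
  qed
  then show ?thesis
    using assms(1) by (auto simp: card_le_Suc0_iff_eq)
qed

lemma separated_exists_far_point:
  fixes S A :: "'a::metric_space set"
  assumes "pairwise (\<lambda>y z. 2 * \<epsilon> < dist y z) S" and "finite A" and "card A < card S"
  shows "\<exists>y\<in>S. \<forall>a\<in>A. \<epsilon> < dist a y"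
proof -
  have "finite S"
    using assms(3) card.infinite by fastforce
  define Near where "Near = (\<Union>a\<in>A. S \<inter> cball a \<epsilon>)"
  have "card Near \<le> (\<Sum>a\<in>A. card (S \<inter> cball a \<epsilon>))"
    unfolding Near_def using assms(2) by (rule card_UN_le)
  also have "\<dots> \<le> (\<Sum>a\<in>A. 1)"
    by (intro sum_mono separated_cball_card_le_1 \<open>finite S\<close> assms(1))
  finally have "card Near < card S"
    using assms(3) by simp
  then have "\<not> S \<subseteq> Near"
    using \<open>finite S\<close> card_mono[of Near S] by (auto simp: Near_def)
  then show ?thesis
    by (fastforce simp: Near_def not_less)
qed

lemma greedy_separated_choice:
  fixes L :: "nat \<Rightarrow> 'a::metric_space set"
  assumes "\<And>i. i \<in> {1..n} \<Longrightarrow> i \<le> card (L i)"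
    and "\<And>i. i \<in> {1..n} \<Longrightarrow> pairwise (\<lambda>y z. 2 * \<epsilon> < dist y z) (L i)"
  shows "\<exists>x. (\<forall>i\<in>{1..n}. x i \<in> L i) \<and>
           (\<forall>i i'. 1 \<le> i \<and> i < i' \<and> i' \<le> n \<longrightarrow> \<epsilon> < dist (x i) (x i'))"
  using assms
proof (induction n)
  case 0
  then show ?case by auto
next
  case (Suc n)
  then obtain x where x_in: "\<forall>i\<in>{1..n}. x i \<in> L i"
    and x_far: "\<forall>i i'. 1 \<le> i \<and> i < i' \<and> i' \<le> n \<longrightarrow> \<epsilon> < dist (x i) (x i')"
    by auto
  have "card (x ` {1..n}) < card (L (Suc n))"
    using card_image_le[of "{1..n}" x] Suc.prems(1)[of "Suc n"] by simp
  then obtain y where y: "y \<in> L (Suc n)" "\<forall>i\<in>{1..n}. \<epsilon> < dist (x i) y"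
    using separated_exists_far_point[OF Suc.prems(2)[of "Suc n"], of "x ` {1..n}"] by auto
  have "\<forall>i\<in>{1..Suc n}. (x(Suc n := y)) i \<in> L i"
    using x_in y(1) by (auto simp: le_Suc_eq)
  moreover have "\<forall>i i'. 1 \<le> i \<and> i < i' \<and> i' \<le> Suc n \<longrightarrow>
                   \<epsilon> < dist ((x(Suc n := y)) i) ((x(Suc n := y)) i')"
    using x_far y(2) by (auto simp: le_Suc_eq)
  ultimately show ?case by blast
qed

theorem lemma4p1:
  fixes L :: "nat \<Rightarrow> 'a::metric_space set" and k :: nat and \<epsilon> :: real
  assumes "k \<noteq> 1" and "\<epsilon> > 0"
    and "\<And>i. i \<in> {1..k} \<Longrightarrow> finite (L i) \<and> card (L i) = k"
    and "\<And>i x y. i \<in> {1..k} \<Longrightarrow> x \<in> L i \<Longrightarrow> y \<in> L i \<Longrightarrow> x \<noteq> y \<Longrightarrow> dist x y > 2 * \<epsilon>"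
  shows "\<exists>x :: nat \<Rightarrow> 'a. (\<forall>i\<in>{1..k}. x i \<in> L i) \<and>
           (\<forall>i i'. 1 \<le> i \<and> i < i' \<and> i' \<le> k \<longrightarrow> dist (x i) (x i') > \<epsilon>)"
proof -
  have "i \<le> card (L i)" if "i \<in> {1..k}" for i
    using assms(3)[OF that] that by simp
  moreover have "pairwise (\<lambda>y z. 2 * \<epsilon> < dist y z) (L i)" if "i \<in> {1..k}" for i
    using assms(4)[OF that] by (auto simp: pairwise_def)
  ultimately show ?thesis
    using greedy_separated_choice[of k L \<epsilon>] by blast
qed

end
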